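(* Let $K$ be a positive integer, let $J$ be a positive integer or $\infty$, write $[J]=\{1,\dots,J\}$ (with $[J]=\mathbb{Z}_+$ if $J=\infty$), and let $Q=[Q_1,\dots,Q_K]$ with $Q_l:[J]\to\{0,1\}$. Let $k\in\{1,\dots,K\}$ and suppose $k$ does not mask any $k'\neq k$. Then $$\{k\}=\bigcap_{\substack{S\subset\{1,\dots,K\}\\ k\in S,\ \mathcal{R}(S)\neq\emptyset}} S.$$
   Context: $\operatorname{supp}(Q_l)=\{j: Q_l(j)=1\}$. For $S\subset\{1,\dots,K\}$, $\mathcal{R}(S)\subset[J]$ is the set of indices $j$ such that $Q_l(j)=1$ for all $l\in S$ and $Q_l(j)=0$ for all $l\notin S$. We say $k$ masks $k'$ if $\operatorname{supp}(Q_{k})\subset\operatorname{supp}(Q_{k'})$. *)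

theory Defs
  imports Main "HOL-Library.Extended_Nat"
begin

definition idx :: "enat \<Rightarrow> nat set" where
  "idx J = {j. 1 \<le> j \<and> enat j \<le> J}"

definition supp :: "enat \<Rightarrow> (nat \<Rightarrow> nat \<Rightarrow> nat) \<Rightarrow> nat \<Rightarrow> nat set" where
  "supp J Q l = {j \<in> idx J. Q l j = 1}"

definition R :: "nat \<Rightarrow> enat \<Rightarrow> (nat \<Rightarrow> nat \<Rightarrow> nat) \<Rightarrow> nat set \<Rightarrow> nat set" where
  "R K J Q S = {j \<in> idx J. (\<forall>l\<in>S. Q l j = 1) \<and> (\<forall>l\<in>{1..K} - S. Q l j = 0)}"

definition masks :: "enat \<Rightarrow> (nat \<Rightarrow> nat \<Rightarrow> nat) \<Rightarrow> nat \<Rightarrow> nat \<Rightarrow> bool" where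
  "masks J Q k k' \<longleftrightarrow> supp J Q k \<subseteq> supp J Q k'"

end

theory Submission
  imports Defs
begin

text \<open>If k does not mask l, some item j has Q_k(j) = 1 but Q_l(j) \<noteq> 1. The set S of all
  attributes required by j then contains k, satisfies j \<in> R(S), and misses l; so l drops
  out of the intersection.\<close>

definition profile :: "nat \<Rightarrow> (nat \<Rightarrow> nat \<Rightarrow> nat) \<Rightarrow> nat \<Rightarrow> nat set" where
  "profile K Q j = {m \<in> {1..K}. Q m j = 1}"

lemma profile_subset: "profile K Q j \<subseteq> {1..K}"
  by (auto simp: profile_def)

lemma mem_R_profile:
  assumes "\<forall>l\<in>{1..K}. Q l j \<in> {0, 1}" and "j \<in> idx J"
  shows "j \<in> R K J Q (profile K Q j)"
  using assms unfolding R_def profile_def by fastforce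

lemma not_masks_obtains_item:
  assumes "\<not> masks J Q k l" and "k \<in> {1..K}"
  obtains j where "j \<in> idx J" "k \<in> profile K Q j" "l \<notin> profile K Q j"
  using assms by (auto simp: masks_def supp_def profile_def)

theorem lemma3:
  fixes K :: nat and J :: enat and Q :: "nat \<Rightarrow> nat \<Rightarrow> nat" and k :: nat
  assumes "K \<ge> 1" and "J \<ge> 1"
    and "\<forall>l\<in>{1..K}. \<forall>j\<in>idx J. Q l j \<in> {0, 1}"
    and "k \<in> {1..K}"
    and "\<forall>k'\<in>{1..K}. k' \<noteq> k \<longrightarrow> \<not> masks J Q k k'"
  shows "{k} = {l \<in> {1..K}. \<forall>S. S \<subseteq> {1..K} \<and> k \<in> S \<and> R K J Q S \<noteq> {} \<longrightarrow> l \<in> S}"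
proof (intro equalityI subsetI)
  fix l assume "l \<in> {l \<in> {1..K}. \<forall>S. S \<subseteq> {1..K} \<and> k \<in> S \<and> R K J Q S \<noteq> {} \<longrightarrow> l \<in> S}"
  then have l: "l \<in> {1..K}"
    and l_in: "\<And>S. S \<subseteq> {1..K} \<Longrightarrow> k \<in> S \<Longrightarrow> R K J Q S \<noteq> {} \<Longrightarrow> l \<in> S"
    by simp_all
  show "l \<in> {k}"
  proof (rule ccontr)
    assume "l \<notin> {k}"
    with assms(5) l have "\<not> masks J Q k l" by simp
    then obtain j where j: "j \<in> idx J" "k \<in> profile K Q j" "l \<notin> profile K Q j"
      using assms(4) by (rule not_masks_obtains_item)
    have "j \<in> R K J Q (profile K Q j)"
      using assms(3) j(1) by (intro mem_R_profile) simp
    then have "l \<in> profile K Q j"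
      using l_in[OF profile_subset j(2)] by blast
    with j(3) show False ..
  qed
qed (use assms(4) in simp)

end
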